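(* Let $k\ge 3$ and let $a<b$ be integers. Let $S=\{a=p_1<p_2<\dots<p_{k-1}<p_k=b\}$ and let $a<q_2<\dots<q_{k-1}<b$ be integers with $p_j\le q_j$ for all $2\le j\le k-1$. Let $D=\{a,q_2,\dots,q_{k-1},b\}$ and suppose $\lambda_B(D)\preceq\lambda_A(D)$, where $A=a$, $B=b$. Suppose $2\le i\le k-1$ is such that $p_i<q_i$ and $p_i+1\notin S$, and let $S^{new}=(S\setminus\{p_i\})\cup\{p_i+1\}$. If $S^{new}\neq D$, then $\lambda_B(S^{new})\prec\lambda_A(S^{new})$.
   Context: For a finite set $S\subset\mathbb{Z}$ with $a=\min S$, $b=\max S$, set $L=b-a+1$; $\lambda_A(S)=a_1\cdots a_L$ with $a_i=1$ iff $a+i-1\in S$, and $\lambda_B(S)=b_1\cdots b_L$ with $b_i=1$ iff $b-i+1\in S$. For binary strings of equal length, $\prec$ (resp. $\preceq$) denotes strict (resp. non-strict) lexicographic order with $0<1$. (Here $S$ models robots on a line with head at $a$, tail at $b$, the inner robot $r_j$ at $p_j$ having target $q_j$.) *)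

theory Defs
  imports Main
begin

text \<open>Binary strings are modelled as bool lists (False = 0, True = 1), positions indexed from 1
  in the paper, from 0 in the list.\<close>

definition lamA :: "int set \<Rightarrow> bool list" where
  "lamA S = map (\<lambda>i. Min S + i - 1 \<in> S) [1..Max S - Min S + 1]"

definition lamB :: "int set \<Rightarrow> bool list" where
  "lamB S = map (\<lambda>i. Max S - i + 1 \<in> S) [1..Max S - Min S + 1]"

definition lex_less :: "bool list \<Rightarrow> bool list \<Rightarrow> bool" where
  "lex_less xs ys \<longleftrightarrow> length xs = length ys \<and>
     (\<exists>n < length xs. take n xs = take n ys \<and> \<not> xs ! n \<and> ys ! n)"

definition lex_le :: "bool list \<Rightarrow> bool list \<Rightarrow> bool" where
  "lex_le xs ys \<longleftrightarrow> length xs = length ys \<and> (xs = ys \<or> lex_less xs ys)"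

end

theory Submission
  imports Defs
begin

text \<open>Moving the robot at \<open>p\<^sub>i\<close> one step to the right keeps the positions strictly increasing
  and still pointwise below the targets (extended by \<open>a\<close> and \<open>b\<close> at the ends). So the new set
  \<open>T\<close> has the endpoints and cardinality of \<open>D\<close>, and for every \<open>x\<close> at least as many elements
  \<open>\<le> x\<close> as \<open>D\<close>. Hence the first point where \<open>T\<close> and \<open>D\<close> differ lies in \<open>T\<close>, giving
  \<open>\<lambda>\<^sub>A(D) \<prec> \<lambda>\<^sub>A(T)\<close>, and the last one lies in \<open>D\<close>, giving \<open>\<lambda>\<^sub>B(T) \<prec> \<lambda>\<^sub>B(D)\<close>.
  Chaining with \<open>\<lambda>\<^sub>B(D) \<preceq> \<lambda>\<^sub>A(D)\<close> gives the claim.\<close>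

lemma Min_Max_eq_ends:
  fixes X :: "int set"
  assumes "X \<subseteq> {a..b}" "a \<in> X" "b \<in> X"
  shows "Min X = a" "Max X = b"
proof -
  have "finite X" using assms(1) finite_subset by blast
  then show "Min X = a" "Max X = b" using assms by (intro Min_eqI Max_eqI; auto)+
qed

lemma lamA_conv_map:
  assumes "X \<subseteq> {a..b}" "a \<in> X" "b \<in> X"
  shows "lamA X = map (\<lambda>n. a + int n \<in> X) [0..<nat (b - a + 1)]"
  using Min_Max_eq_ends[OF assms] assms unfolding lamA_def
  by (intro nth_equalityI) (auto simp: nth_upto)

lemma lamB_conv_map:
  assumes "X \<subseteq> {a..b}" "a \<in> X" "b \<in> X"
  shows "lamB X = map (\<lambda>n. b - int n \<in> X) [0..<nat (b - a + 1)]"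
  using Min_Max_eq_ends[OF assms] assms unfolding lamB_def
  by (intro nth_equalityI) (auto simp: nth_upto)

lemma lex_less_map_iff:
  "lex_less (map f [0..<N]) (map g [0..<N]) \<longleftrightarrow> (\<exists>n<N. (\<forall>m<n. f m = g m) \<and> \<not> f n \<and> g n)"
proof -
  have "take n (map f [0..<N]) = take n (map g [0..<N]) \<longleftrightarrow> (\<forall>m<n. f m = g m)" if "n < N" for n
    using that by (auto simp: take_map map_eq_conv min_def)
  then show ?thesis unfolding lex_less_def by auto
qed

lemma lex_less_trans:
  assumes "lex_less xs ys" "lex_less ys zs"
  shows "lex_less xs zs"
proof -
  obtain m where m: "m < length xs" "take m xs = take m ys" "\<not> xs ! m" "ys ! m"
    using assms(1) unfolding lex_less_def by blast
  obtain n where n: "n < length ys" "take n ys = take n zs" "\<not> ys ! n" "zs ! n"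
    using assms(2) unfolding lex_less_def by blast
  have len: "length xs = length ys" "length ys = length zs"
    using assms unfolding lex_less_def by simp_all
  have "m \<noteq> n" using m n by auto
  then consider "m < n" | "n < m" by linarith
  then show ?thesis
  proof cases
    case 1
    then have "take m ys = take m zs" "ys ! m = zs ! m"
      using n(2) by (metis min.strict_order_iff take_take, metis nth_take)
    then show ?thesis unfolding lex_less_def using m len by auto
  next
    case 2
    then have "take n xs = take n ys" "xs ! n = ys ! n"
      using m(2) by (metis min.strict_order_iff take_take, metis nth_take)
    then show ?thesis unfolding lex_less_def using n len by auto
  qed
qed

lemma lex_less_lamA_of_least_diff:
  assumes T: "T \<subseteq> {a..b}" "a \<in> T" "b \<in> T" and D: "D \<subseteq> {a..b}" "a \<in> D" "b \<in> D"
    and "x \<in> T" "x \<notin> D" and agree: "\<And>y. y < x \<Longrightarrow> y \<in> D \<longleftrightarrow> y \<in> T"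
  shows "lex_less (lamA D) (lamA T)"
proof -
  have "a \<le> x" "x \<le> b" using \<open>x \<in> T\<close> T(1) by auto
  then show ?thesis
    unfolding lamA_conv_map[OF T] lamA_conv_map[OF D] lex_less_map_iff
    using \<open>x \<in> T\<close> \<open>x \<notin> D\<close> agree by (intro exI[of _ "nat (x - a)"]) auto
qed

lemma lex_less_lamB_of_greatest_diff:
  assumes T: "T \<subseteq> {a..b}" "a \<in> T" "b \<in> T" and D: "D \<subseteq> {a..b}" "a \<in> D" "b \<in> D"
    and "x \<in> D" "x \<notin> T" and agree: "\<And>y. x < y \<Longrightarrow> y \<in> T \<longleftrightarrow> y \<in> D"
  shows "lex_less (lamB T) (lamB D)"
proof -
  have "a \<le> x" "x \<le> b" using \<open>x \<in> D\<close> D(1) by auto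
  then show ?thesis
    unfolding lamB_conv_map[OF T] lamB_conv_map[OF D] lex_less_map_iff
    using \<open>x \<in> D\<close> \<open>x \<notin> T\<close> agree by (intro exI[of _ "nat (b - x)"]) auto
qed

lemma least_diff_mem_dominating:
  fixes T D :: "int set"
  assumes "finite D" and dom: "\<And>y. card {d\<in>D. d \<le> y} \<le> card {t\<in>T. t \<le> y}"
    and agree: "\<And>y. y < x \<Longrightarrow> y \<in> D \<longleftrightarrow> y \<in> T" and "x \<in> D"
  shows "x \<in> T"
proof (rule ccontr)
  assume "x \<notin> T"
  then have "{t\<in>T. t \<le> x} = {d\<in>D. d < x}" using agree by (auto simp: le_less)
  moreover have "{d\<in>D. d \<le> x} = insert x {d\<in>D. d < x}" using \<open>x \<in> D\<close> by auto
  ultimately show False using dom[of x] \<open>finite D\<close> by simp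
qed

lemma greatest_diff_mem_dominated:
  fixes T D :: "int set"
  assumes "finite T" "finite D" "card T = card D"
    and dom: "\<And>y. card {d\<in>D. d \<le> y} \<le> card {t\<in>T. t \<le> y}"
    and agree: "\<And>y. x < y \<Longrightarrow> y \<in> T \<longleftrightarrow> y \<in> D" and "x \<in> T"
  shows "x \<in> D"
proof (rule ccontr)
  assume "x \<notin> D"
  have T_upper: "{t\<in>T. x \<le> t} = insert x {t\<in>T. x < t}" using \<open>x \<in> T\<close> by auto
  have D_upper: "{d\<in>D. x \<le> d} = {t\<in>T. x < t}" using agree \<open>x \<notin> D\<close> by (auto simp: le_less)
  have "{t\<in>T. t \<le> x - 1} = T - {t\<in>T. x \<le> t}" "{d\<in>D. d \<le> x - 1} = D - {d\<in>D. x \<le> d}"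
    by auto
  then have "card {t\<in>T. t \<le> x - 1} = card T - card {t\<in>T. x \<le> t}"
      "card {d\<in>D. d \<le> x - 1} = card D - card {d\<in>D. x \<le> d}"
    using assms(1,2) by (simp_all add: card_Diff_subset)
  moreover have "card {t\<in>T. x \<le> t} \<le> card T" using assms(1) by (intro card_mono) auto
  ultimately show False
    using dom[of "x - 1"] \<open>card T = card D\<close> T_upper D_upper \<open>finite T\<close> by simp
qed

lemma lex_less_lamB_lamA_of_dominating:
  fixes T D :: "int set"
  assumes T: "T \<subseteq> {a..b}" "a \<in> T" "b \<in> T" and D: "D \<subseteq> {a..b}" "a \<in> D" "b \<in> D"
    and "card T = card D" "T \<noteq> D"
    and dom: "\<And>y. card {d\<in>D. d \<le> y} \<le> card {t\<in>T. t \<le> y}"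
    and "lex_le (lamB D) (lamA D)"
  shows "lex_less (lamB T) (lamA T)"
proof -
  have fin: "finite T" "finite D" using T(1) D(1) finite_subset by blast+
  define \<Delta> where "\<Delta> = (T - D) \<union> (D - T)"
  have "finite \<Delta>" "\<Delta> \<noteq> {}" using fin \<open>T \<noteq> D\<close> unfolding \<Delta>_def by auto
  define x where "x = Min \<Delta>"
  have "x \<in> \<Delta>" using Min_in[OF \<open>finite \<Delta>\<close> \<open>\<Delta> \<noteq> {}\<close>] unfolding x_def .
  have below_x: "y \<in> D \<longleftrightarrow> y \<in> T" if "y < x" for y
    using Min_le[OF \<open>finite \<Delta>\<close>, of y] that unfolding x_def \<Delta>_def by auto
  have "x \<in> T - D"
    using \<open>x \<in> \<Delta>\<close> least_diff_mem_dominating[OF fin(2) dom below_x] unfolding \<Delta>_def by blast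
  then have A: "lex_less (lamA D) (lamA T)"
    using lex_less_lamA_of_least_diff[OF T D _ _ below_x] by blast
  define z where "z = Max \<Delta>"
  have "z \<in> \<Delta>" using Max_in[OF \<open>finite \<Delta>\<close> \<open>\<Delta> \<noteq> {}\<close>] unfolding z_def .
  have above_z: "y \<in> T \<longleftrightarrow> y \<in> D" if "z < y" for y
    using Max_ge[OF \<open>finite \<Delta>\<close>, of y] that unfolding z_def \<Delta>_def by auto
  have "z \<in> D - T"
    using \<open>z \<in> \<Delta>\<close> greatest_diff_mem_dominated[OF fin \<open>card T = card D\<close> dom above_z]
    unfolding \<Delta>_def by blast
  then have B: "lex_less (lamB T) (lamB D)"
    using lex_less_lamB_of_greatest_diff[OF T D _ _ above_z] by blast
  from \<open>lex_le (lamB D) (lamA D)\<close> have "lamB D = lamA D \<or> lex_less (lamB D) (lamA D)"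
    unfolding lex_le_def by blast
  then show ?thesis using A B lex_less_trans by metis
qed

lemma card_below_image_le_of_pointwise_le:
  fixes f g :: "'a \<Rightarrow> 'b::linorder"
  assumes "inj_on f A" "inj_on g A" "finite A" "\<forall>j\<in>A. f j \<le> g j"
  shows "card {y\<in>g ` A. y \<le> x} \<le> card {y\<in>f ` A. y \<le> x}"
proof -
  have "card {y\<in>h ` A. y \<le> x} = card {j\<in>A. h j \<le> x}" if "inj_on h A" for h :: "'a \<Rightarrow> 'b"
  proof -
    have "{y\<in>h ` A. y \<le> x} = h ` {j\<in>A. h j \<le> x}" by auto
    moreover have "inj_on h {j\<in>A. h j \<le> x}" using that by (rule inj_on_subset) blast
    ultimately show ?thesis by (simp add: card_image)
  qed
  moreover have "card {j\<in>A. g j \<le> x} \<le> card {j\<in>A. f j \<le> x}"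
    using assms(3,4) by (intro card_mono) force+
  ultimately show ?thesis using assms(1,2) by simp
qed

lemma strict_mono_on_image_subset_ends:
  fixes f :: "'a::order \<Rightarrow> 'b::preorder"
  assumes "strict_mono_on {m..n} f" "m \<le> n"
  shows "f ` {m..n} \<subseteq> {f m..f n}"
proof
  fix y assume "y \<in> f ` {m..n}"
  then obtain j where "j \<in> {m..n}" "y = f j" by blast
  then show "y \<in> {f m..f n}" using assms strict_mono_on_leD[of "{m..n}" f] by auto
qed

lemma lex_less_lamB_lamA_of_pointwise_le:
  fixes f g :: "nat \<Rightarrow> int"
  assumes f: "strict_mono_on {1..k} f" and g: "strict_mono_on {1..k} g" and "1 \<le> k"
    and ends: "f 1 = g 1" "f k = g k" and le: "\<forall>j\<in>{1..k}. f j \<le> g j"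
    and "f ` {1..k} \<noteq> g ` {1..k}" "lex_le (lamB (g ` {1..k})) (lamA (g ` {1..k}))"
  shows "lex_less (lamB (f ` {1..k})) (lamA (f ` {1..k}))"
proof (rule lex_less_lamB_lamA_of_dominating)
  have inj: "inj_on f {1..k}" "inj_on g {1..k}"
    using f g by (simp_all add: strict_mono_on_imp_inj_on)
  then show "card (f ` {1..k}) = card (g ` {1..k})" by (simp add: card_image)
  show "card {d\<in>g ` {1..k}. d \<le> y} \<le> card {t\<in>f ` {1..k}. t \<le> y}" for y
    using card_below_image_le_of_pointwise_le[OF inj finite_atLeastAtMost le] .
  have "1 \<in> {1..k}" "k \<in> {1..k}" using \<open>1 \<le> k\<close> by simp_all
  then have "f 1 \<in> f ` {1..k}" "f k \<in> f ` {1..k}" "g 1 \<in> g ` {1..k}" "g k \<in> g ` {1..k}"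
    by blast+
  then show "g 1 \<in> f ` {1..k}" "g k \<in> f ` {1..k}" "g 1 \<in> g ` {1..k}" "g k \<in> g ` {1..k}"
    unfolding ends .
  show "f ` {1..k} \<subseteq> {g 1..g k}"
    using strict_mono_on_image_subset_ends[OF f \<open>1 \<le> k\<close>] unfolding ends .
  show "g ` {1..k} \<subseteq> {g 1..g k}"
    using strict_mono_on_image_subset_ends[OF g \<open>1 \<le> k\<close>] .
qed fact+

lemma strict_mono_on_fun_upd_plus_one:
  fixes p :: "'a::linorder \<Rightarrow> int"
  assumes "strict_mono_on A p" "p i + 1 \<notin> p ` A"
  shows "strict_mono_on A (p(i := p i + 1))"
proof (rule strict_mono_onI)
  fix r s assume "r \<in> A" "s \<in> A" "r < s"
  then have "p r < p s" using assms(1) strict_mono_onD by blast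
  moreover have "p s \<noteq> p i + 1" using assms(2) \<open>s \<in> A\<close> by force
  ultimately show "(p(i := p i + 1)) r < (p(i := p i + 1)) s" using \<open>r < s\<close> by auto
qed

lemma image_fun_upd_inj_on:
  assumes "inj_on p A" "i \<in> A"
  shows "p(i := v) ` A = (p ` A - {p i}) \<union> {v}"
  using assms by (auto simp: fun_upd_image dest: inj_onD)

lemma strict_mono_on_extend_ends:
  fixes q :: "nat \<Rightarrow> 'a::linorder"
  assumes q: "strict_mono_on {2..k-1} q" and "3 \<le> k" "a < q 2" "q (k - 1) < b"
  shows "strict_mono_on {1..k} (q(1 := a, k := b))"
proof (rule strict_mono_onI)
  have inner: "a < q j \<and> q j < b" if "j \<in> {2..k-1}" for j
    using that assms strict_mono_on_leD[OF q, of 2 j] strict_mono_on_leD[OF q, of j "k - 1"]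
    by fastforce
  then have "a < b" using \<open>3 \<le> k\<close> by fastforce
  fix r s assume "r \<in> {1..k}" "s \<in> {1..k}" "r < s"
  then consider "r = 1" "s = k" | "r = 1" "s \<in> {2..k-1}" | "r \<in> {2..k-1}" "s = k"
    | "r \<in> {2..k-1}" "s \<in> {2..k-1}" by fastforce
  then show "(q(1 := a, k := b)) r < (q(1 := a, k := b)) s"
    using assms inner strict_mono_onD[OF q] \<open>r < s\<close> \<open>a < b\<close> by cases (auto dest: less_trans)
qed

lemma image_extend_ends:
  fixes q :: "nat \<Rightarrow> 'a"
  assumes "3 \<le> k"
  shows "(q(1 := a, k := b)) ` {1..k} = {a, b} \<union> q ` {2..k-1}"
proof -
  have "{1..k} = {1, k} \<union> {2..k-1}" using assms by auto
  then have "(q(1 := a, k := b)) ` {1..k}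
      = (q(1 := a, k := b)) ` {1, k} \<union> (q(1 := a, k := b)) ` {2..k-1}"
    by (simp only: image_Un)
  also have "(q(1 := a, k := b)) ` {1, k} = {a, b}" using assms by auto
  also have "(q(1 := a, k := b)) ` {2..k-1} = q ` {2..k-1}" by (rule image_cong) auto
  finally show ?thesis .
qed

theorem lemma2:
  fixes k :: nat and a b :: int and p q :: "nat \<Rightarrow> int" and i :: nat
    and S D :: "int set"
  assumes "k \<ge> 3" and "a < b"
    and "strict_mono_on {1..k} p" and "p 1 = a" and "p k = b"
    and "S = p ` {1..k}"
    and "strict_mono_on {2..k-1} q" and "a < q 2" and "q (k-1) < b"
    and "\<forall>j. 2 \<le> j \<and> j \<le> k - 1 \<longrightarrow> p j \<le> q j"
    and "D = {a, b} \<union> q ` {2..k-1}"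
    and "lex_le (lamB D) (lamA D)"
    and "2 \<le> i" and "i \<le> k - 1" and "p i < q i" and "p i + 1 \<notin> S"
    and "(S - {p i}) \<union> {p i + 1} \<noteq> D"
  shows "lex_less (lamB ((S - {p i}) \<union> {p i + 1})) (lamA ((S - {p i}) \<union> {p i + 1}))"
proof -
  define p' where "p' = p(i := p i + 1)"
  define q' where "q' = q(1 := a, k := b)"
  have "i \<in> {1..k}" "1 \<le> k" using assms(1,13,14) by auto
  have S': "(S - {p i}) \<union> {p i + 1} = p' ` {1..k}"
    unfolding p'_def assms(6)
    using image_fun_upd_inj_on strict_mono_on_imp_inj_on assms(3) \<open>i \<in> {1..k}\<close> by metis
  have D': "D = q' ` {1..k}" unfolding q'_def assms(11) using image_extend_ends assms(1) by metis
  have "strict_mono_on {1..k} p'"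
    unfolding p'_def using strict_mono_on_fun_upd_plus_one assms(3,6,16) by metis
  moreover have "strict_mono_on {1..k} q'"
    unfolding q'_def using strict_mono_on_extend_ends assms(1,7-9) by metis
  moreover have "\<forall>j\<in>{1..k}. p' j \<le> q' j"
    using assms(1,4,5,10,13-15) unfolding p'_def q'_def by auto
  moreover have "p' 1 = q' 1" "p' k = q' k"
    using assms(1,4,5,13,14) unfolding p'_def q'_def by auto
  ultimately show ?thesis
    using lex_less_lamB_lamA_of_pointwise_le \<open>1 \<le> k\<close> assms(12,17) unfolding S' D' by metis
qed

end
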